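(* Let $k\ge0$ be real. For $x=e^{i\theta}$ on the unit circle with $\cos\theta\ne0$, set $$\Delta_k(x)=k^2-16\cos^2\theta\,(3-4\cos^2\theta),\qquad y_{1}(x)=\frac{k+\sqrt{\Delta_k(x)}}{4\cos\theta},\qquad y_{2}(x)=\frac{k-\sqrt{\Delta_k(x)}}{4\cos\theta}.$$ Then: (i) If $k\ge3$ then $\Delta_k(x)\ge0$, so that $y_1(x)$ and $y_2(x)$ are real. (ii) If $0\le k<3$ then $y_1(x)$ and $y_2(x)$ are complex conjugate to each other whenever $$\frac{3-\sqrt{9-k^2}}8<\cos^2\theta<\frac{3+\sqrt{9-k^2}}8,$$ and in this case $|y_1(x)|=|y_2(x)|=|3-4\cos^2\theta|^{1/2}$. Furthermore, $|y_1(x)|=|y_2(x)|>1$ holds if and only if $\frac{3-\sqrt{9-k^2}}8<\cos^2\theta<\frac12$ when $0\le k<2\sqrt2$, and if and only if $\frac{3-\sqrt{9-k^2}}8<\cos^2\theta<\frac{3+\sqrt{9-k^2}}8$ when $2\sqrt2\le k<3$.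
   Context: $y_1(x),y_2(x)$ are the two roots in $y$ of $(x+x^{-1})y^2-ky-(x^3+x^{-3})=0$ (which equals $-y^3R_k(x/y,1/(xy))$ for $R_k(x,y)=y^3-y+x^3-x+kxy$); their product is $3-4\cos^2\theta$. Here $\sqrt{\cdot}$ is the principal square root. *)

theory Defs
  imports "HOL-Analysis.Analysis"
begin

text \<open>x = e^{i theta}; only cos theta enters.  Delta_k(x) = k^2 - 16 cos^2 theta (3 - 4 cos^2 theta).\<close>
definition Delta :: "real \<Rightarrow> real \<Rightarrow> real" where
  "Delta k \<theta> = k\<^sup>2 - 16 * (cos \<theta>)\<^sup>2 * (3 - 4 * (cos \<theta>)\<^sup>2)"

definition y1 :: "real \<Rightarrow> real \<Rightarrow> complex" where
  "y1 k \<theta> = (complex_of_real k + csqrt (complex_of_real (Delta k \<theta>))) / complex_of_real (4 * cos \<theta>)"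

definition y2 :: "real \<Rightarrow> real \<Rightarrow> complex" where
  "y2 k \<theta> = (complex_of_real k - csqrt (complex_of_real (Delta k \<theta>))) / complex_of_real (4 * cos \<theta>)"

end

theory Submission
  imports Defs
begin

text \<open>Writing \<open>C = cos\<^sup>2 \<theta>\<close>, one has \<open>\<Delta>\<^sub>k = (8C - 3)\<^sup>2 + k\<^sup>2 - 9\<close>, which is nonnegative for \<open>k \<ge> 3\<close>
  and negative exactly when \<open>8C\<close> lies within \<open>\<surd>(9 - k\<^sup>2)\<close> of 3. For \<open>\<Delta>\<^sub>k \<le> 0\<close> the two roots of the
  real quadratic are conjugate, and the modulus of each is the square root of their product
  \<open>(k\<^sup>2 - \<Delta>\<^sub>k) / 16C = 3 - 4C\<close>. So \<open>|y\<^sub>1| > 1\<close> means \<open>C < 1/2\<close>, and the upper end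
  \<open>(3 + \<surd>(9 - k\<^sup>2))/8\<close> of the interval is at most \<open>1/2\<close> exactly when \<open>k \<ge> 2\<surd>2\<close>.\<close>

lemma csqrt_of_real_in_Reals: "D \<ge> 0 \<Longrightarrow> csqrt (complex_of_real D) \<in> \<real>"
  by (simp add: csqrt_of_real)

lemma cnj_csqrt_of_real_nonpos:
  "D \<le> 0 \<Longrightarrow> cnj (csqrt (complex_of_real D)) = - csqrt (complex_of_real D)"
  by simp

lemma cmod_of_real_add_csqrt_nonpos:
  assumes "D \<le> 0"
  shows "cmod (complex_of_real b + csqrt (complex_of_real D)) = sqrt (b\<^sup>2 - D)"
proof -
  have "complex_of_real b + csqrt (complex_of_real D) = Complex b (sqrt (- D))"
    using assms by (simp add: Complex_eq)
  then show ?thesis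
    using assms by (simp add: cmod_def)
qed

lemma Delta_eq_square: "Delta k \<theta> = (8 * (cos \<theta>)\<^sup>2 - 3)\<^sup>2 + k\<^sup>2 - 9"
  unfolding Delta_def by (simp add: power2_eq_square algebra_simps)

lemma Delta_nonneg:
  assumes "3 \<le> \<bar>k\<bar>"
  shows "Delta k \<theta> \<ge> 0"
proof -
  have "9 \<le> k\<^sup>2"
    using assms abs_le_square_iff[of 3 k] by simp
  then show ?thesis
    unfolding Delta_eq_square by (simp add: add_increasing)
qed

lemma Delta_neg:
  assumes "(3 - sqrt (9 - k\<^sup>2)) / 8 < (cos \<theta>)\<^sup>2" and "(cos \<theta>)\<^sup>2 < (3 + sqrt (9 - k\<^sup>2)) / 8"
  shows "Delta k \<theta> < 0"
proof -
  have "\<bar>8 * (cos \<theta>)\<^sup>2 - 3\<bar> < sqrt (9 - k\<^sup>2)"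
    using assms by (simp add: abs_less_iff field_simps)
  then have "(8 * (cos \<theta>)\<^sup>2 - 3)\<^sup>2 < 9 - k\<^sup>2"
    by (metis real_sqrt_abs real_sqrt_less_iff)
  then show ?thesis
    unfolding Delta_eq_square by linarith
qed

lemma cos_sq_le_if_Delta_nonpos:
  assumes "Delta k \<theta> \<le> 0"
  shows "4 * (cos \<theta>)\<^sup>2 \<le> 3"
proof -
  have "0 \<le> 16 * (cos \<theta>)\<^sup>2 * (3 - 4 * (cos \<theta>)\<^sup>2)"
    using assms zero_le_power2[of k] unfolding Delta_def by linarith
  then show ?thesis
    by (cases "cos \<theta> = 0") (auto simp: zero_le_mult_iff)
qed

lemma y1_in_Reals: "Delta k \<theta> \<ge> 0 \<Longrightarrow> y1 k \<theta> \<in> \<real>"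
  unfolding y1_def by (intro Reals_divide Reals_add csqrt_of_real_in_Reals) auto

lemma y2_in_Reals: "Delta k \<theta> \<ge> 0 \<Longrightarrow> y2 k \<theta> \<in> \<real>"
  unfolding y2_def by (intro Reals_divide Reals_diff csqrt_of_real_in_Reals) auto

lemma y2_eq_cnj_y1: "Delta k \<theta> \<le> 0 \<Longrightarrow> y2 k \<theta> = cnj (y1 k \<theta>)"
  unfolding y1_def y2_def by (simp only: complex_cnj_divide complex_cnj_add
    complex_cnj_complex_of_real cnj_csqrt_of_real_nonpos diff_conv_add_uminus)

lemma cmod_y1:
  assumes "Delta k \<theta> \<le> 0" and "cos \<theta> \<noteq> 0"
  shows "cmod (y1 k \<theta>) = sqrt \<bar>3 - 4 * (cos \<theta>)\<^sup>2\<bar>"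
proof -
  have "k\<^sup>2 - Delta k \<theta> = (4 * cos \<theta>)\<^sup>2 * \<bar>3 - 4 * (cos \<theta>)\<^sup>2\<bar>"
    using cos_sq_le_if_Delta_nonpos[OF assms(1)] unfolding Delta_def
    by (simp add: power2_eq_square algebra_simps)
  then have "sqrt (k\<^sup>2 - Delta k \<theta>) = \<bar>4 * cos \<theta>\<bar> * sqrt \<bar>3 - 4 * (cos \<theta>)\<^sup>2\<bar>"
    by (simp add: real_sqrt_mult abs_mult)
  moreover have "cmod (y1 k \<theta>) = sqrt (k\<^sup>2 - Delta k \<theta>) / \<bar>4 * cos \<theta>\<bar>"
    unfolding y1_def norm_divide using cmod_of_real_add_csqrt_nonpos[OF assms(1)] by (simp add: abs_mult)
  ultimately show ?thesis
    using assms(2) by simp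
qed

lemma sqrt_nine_minus_sq_le_one: "2 * sqrt 2 \<le> k \<Longrightarrow> sqrt (9 - k\<^sup>2) \<le> 1"
proof -
  assume "2 * sqrt 2 \<le> k"
  then have "(2 * sqrt 2)\<^sup>2 \<le> k\<^sup>2"
    by (intro power_mono) auto
  then show ?thesis
    by (simp add: power_mult_distrib)
qed

theorem lemma1:
  fixes k \<theta> :: real
  assumes "k \<ge> 0" and "cos \<theta> \<noteq> 0"
  shows "(k \<ge> 3 \<longrightarrow> Delta k \<theta> \<ge> 0 \<and> y1 k \<theta> \<in> \<real> \<and> y2 k \<theta> \<in> \<real>) \<and>
    (k < 3 \<and> (3 - sqrt (9 - k\<^sup>2)) / 8 < (cos \<theta>)\<^sup>2 \<and> (cos \<theta>)\<^sup>2 < (3 + sqrt (9 - k\<^sup>2)) / 8 \<longrightarrow>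
       y2 k \<theta> = cnj (y1 k \<theta>) \<and>
       cmod (y1 k \<theta>) = sqrt \<bar>3 - 4 * (cos \<theta>)\<^sup>2\<bar> \<and>
       cmod (y2 k \<theta>) = sqrt \<bar>3 - 4 * (cos \<theta>)\<^sup>2\<bar> \<and>
       (k < 2 * sqrt 2 \<longrightarrow>
          ((cmod (y1 k \<theta>) = cmod (y2 k \<theta>) \<and> cmod (y1 k \<theta>) > 1) \<longleftrightarrow>
           (3 - sqrt (9 - k\<^sup>2)) / 8 < (cos \<theta>)\<^sup>2 \<and> (cos \<theta>)\<^sup>2 < 1 / 2)) \<and>
       (2 * sqrt 2 \<le> k \<longrightarrow>
          ((cmod (y1 k \<theta>) = cmod (y2 k \<theta>) \<and> cmod (y1 k \<theta>) > 1) \<longleftrightarrow>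
           (3 - sqrt (9 - k\<^sup>2)) / 8 < (cos \<theta>)\<^sup>2 \<and> (cos \<theta>)\<^sup>2 < (3 + sqrt (9 - k\<^sup>2)) / 8)))"
proof (intro conjI impI)
  assume "k \<ge> 3"
  then show "Delta k \<theta> \<ge> 0" "y1 k \<theta> \<in> \<real>" "y2 k \<theta> \<in> \<real>"
    using Delta_nonneg y1_in_Reals y2_in_Reals by auto
next
  let ?C = "(cos \<theta>)\<^sup>2" and ?r = "sqrt (9 - k\<^sup>2)"
  assume "k < 3 \<and> (3 - ?r) / 8 < ?C \<and> ?C < (3 + ?r) / 8"
  then have lower: "(3 - ?r) / 8 < ?C" and upper: "?C < (3 + ?r) / 8"
    by auto
  have Delta_nonpos: "Delta k \<theta> \<le> 0"
    using Delta_neg[OF lower upper] by simp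
  show conj: "y2 k \<theta> = cnj (y1 k \<theta>)"
    using y2_eq_cnj_y1[OF Delta_nonpos] .
  show modulus: "cmod (y1 k \<theta>) = sqrt \<bar>3 - 4 * ?C\<bar>"
    using cmod_y1[OF Delta_nonpos assms(2)] .
  then show "cmod (y2 k \<theta>) = sqrt \<bar>3 - 4 * ?C\<bar>"
    by (simp add: conj)
  have "4 * ?C \<le> 3"
    using cos_sq_le_if_Delta_nonpos[OF Delta_nonpos] .
  then have modulus_gt_1: "1 < cmod (y1 k \<theta>) \<longleftrightarrow> ?C < 1 / 2"
    by (auto simp: modulus)
  show "(cmod (y1 k \<theta>) = cmod (y2 k \<theta>) \<and> cmod (y1 k \<theta>) > 1) \<longleftrightarrow> (3 - ?r) / 8 < ?C \<and> ?C < 1 / 2"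
    using lower modulus_gt_1 by (simp add: conj)
  assume "2 * sqrt 2 \<le> k"
  then have "?r \<le> 1"
    by (rule sqrt_nine_minus_sq_le_one)
  with upper have "?C < 1 / 2"
    by argo
  then show "(cmod (y1 k \<theta>) = cmod (y2 k \<theta>) \<and> cmod (y1 k \<theta>) > 1) \<longleftrightarrow> (3 - ?r) / 8 < ?C \<and> ?C < (3 + ?r) / 8"
    using lower upper modulus_gt_1 by (simp add: conj)
qed

end
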